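(* Let $\mathcal{L}$ be a Lie algebra over $\mathbf{k}$, $k\in\mathbf{k}$ nonzero, and let $((\mathcal{U},q),i)$ be its enveloping$^{6\text{-th}}$ algebra with multiplication $m$ and unit $u:\mathbf{k}\to\mathcal{U}$. Let $\Delta$, $\varepsilon$ be the algebra homomorphisms determined by $\Delta(q)=q\otimes q$, $\Delta(x)=(x+kqx-xq)\otimes1+1\otimes(x+kqx-xq)+(1-k)qx\otimes q+(1-k)q\otimes qx$, $\varepsilon(q)=1$, $\varepsilon(x)=0$ ($x\in i(\mathcal{L})$), let $\sigma(a)=a+qa-aq$, and let $S$ be the unique invariant anti-homomorphism with $S(q)=1-q$ and $S(x)=-\frac1kx-kqx+\frac1kxq$ for $x\in i(\mathcal{L})$. Then $\mathcal{U}$ with $(m,u,\Delta,\varepsilon,\sigma)$ is a bialgebra with $\sigma$-counit, and it is a Hopf-like algebra with antipode-like $S$, i.e. $m(S\otimes\mathrm{id})\Delta=u\varepsilon S=m(\mathrm{id}\otimes S)\Delta$.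
   Context: Invariant algebra $(A,q)=\{x\in A: qxq=qx\}$ for an idempotent $q$ of an associative unital algebra $A$; $\mathrm{Lie}(A,q)$ uses the bracket $[x,y]_{6,k}=xy-yx-xyq+yxq+kxqy-kyqx$. The enveloping$^{6\text{-th}}$ algebra $((\mathcal{U},q),i)$ is an invariant algebra with Lie homomorphism $i:\mathcal{L}\to\mathrm{Lie}(\mathcal{U},q)$ through which every Lie homomorphism into $\mathrm{Lie}(A,q_A)$ of an invariant algebra factors uniquely via a unital multiplicative map preserving idempotents. An invariant anti-homomorphism is a linear $S$ with $S(ab)=S(b)S(a)$, $S(1)=1$, $S(q)=1-q$. A bialgebra with $\sigma$-counit is a vector space $H$ with linear maps $m:H\otimes H\to H$, $u:\mathbf{k}\to H$, $\Delta:H\to H\otimes H$, $\varepsilon:H\to\mathbf{k}$, $\sigma:H\to H$ such that $(H,m,u)$ is an associative unital algebra, $\Delta$ is coassociative ($(\mathrm{id}\otimes\Delta)\Delta=(\Delta\otimes\mathrm{id})\Delta$), $(\varepsilon\otimes\mathrm{id})\Delta(h)=1\otimes\sigma(h)$ and $(\mathrm{id}\otimes\varepsilon)\Delta(h)=\sigma(h)\otimes1$ for all $h$, and $\Delta$ and $\varepsilon$ are unital algebra homomorphisms ($H\otimes H$ with the componentwise product). It is Hopf-like if there is a linear $S:H\to H$ (antipode-like) with $m(S\otimes\mathrm{id})\Delta=u\varepsilon S=m(\mathrm{id}\otimes S)\Delta$. *)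

theory Defs
  imports Complex_Main "HOL-Library.Function_Algebras"
begin

definition lie_algebra ::
  "('k::field \<Rightarrow> 'l::ab_group_add \<Rightarrow> 'l) \<Rightarrow> ('l \<Rightarrow> 'l \<Rightarrow> 'l) \<Rightarrow> bool" where
  "lie_algebra sL br \<longleftrightarrow>
     vector_space sL \<and>
     (\<forall>x y z. br (x + y) z = br x z + br y z) \<and>
     (\<forall>x y z. br x (y + z) = br x y + br x z) \<and>
     (\<forall>c x y. br (sL c x) y = sL c (br x y)) \<and>
     (\<forall>c x y. br x (sL c y) = sL c (br x y)) \<and>
     (\<forall>x. br x x = 0) \<and>
     (\<forall>x y z. br x (br y z) + br y (br z x) + br z (br x y) = 0)"

section \<open>Associative unital algebras, invariant algebras (whole type as carrier)\<close>

definition k_algebra :: "('k::field \<Rightarrow> 'u::ring_1 \<Rightarrow> 'u) \<Rightarrow> bool" where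
  "k_algebra sU \<longleftrightarrow> vector_space sU \<and>
     (\<forall>c x y. sU c (x * y) = sU c x * y \<and> sU c (x * y) = x * sU c y)"

text \<open>An invariant algebra (A,q): q idempotent and every element x satisfies qxq = qx,
i.e. A coincides with (A,q) = {x. qxq = qx}.\<close>

definition invariant_algebra :: "('k::field \<Rightarrow> 'u::ring_1 \<Rightarrow> 'u) \<Rightarrow> 'u \<Rightarrow> bool" where
  "invariant_algebra sU q \<longleftrightarrow> k_algebra sU \<and> q * q = q \<and> (\<forall>x. q * x * q = q * x)"

definition bracket6 :: "('k::field \<Rightarrow> 'u::ring_1 \<Rightarrow> 'u) \<Rightarrow> 'k \<Rightarrow> 'u \<Rightarrow> 'u \<Rightarrow> 'u \<Rightarrow> 'u" where
  "bracket6 sU k q x y =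
     x * y - y * x - x * y * q + y * x * q + sU k (x * q * y) - sU k (y * q * x)"

section \<open>General invariant algebras on a carrier set (targets of the universal property)\<close>

record ('k, 'a) ialg =
  icar :: "'a set"
  iadd :: "'a \<Rightarrow> 'a \<Rightarrow> 'a"
  izero :: "'a"
  ineg :: "'a \<Rightarrow> 'a"
  ism :: "'k \<Rightarrow> 'a \<Rightarrow> 'a"
  imul :: "'a \<Rightarrow> 'a \<Rightarrow> 'a"
  ione :: "'a"
  iq :: "'a"

definition is_invariant_ialg :: "('k::field, 'a) ialg \<Rightarrow> bool" where
  "is_invariant_ialg A \<longleftrightarrow>
     izero A \<in> icar A \<and> ione A \<in> icar A \<and> iq A \<in> icar A \<and>
     (\<forall>x\<in>icar A. \<forall>y\<in>icar A. iadd A x y \<in> icar A \<and> imul A x y \<in> icar A) \<and>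
     (\<forall>x\<in>icar A. ineg A x \<in> icar A \<and> (\<forall>c. ism A c x \<in> icar A)) \<and>
     \<comment> \<open>abelian group\<close>
     (\<forall>x\<in>icar A. \<forall>y\<in>icar A. \<forall>z\<in>icar A. iadd A (iadd A x y) z = iadd A x (iadd A y z)) \<and>
     (\<forall>x\<in>icar A. \<forall>y\<in>icar A. iadd A x y = iadd A y x) \<and>
     (\<forall>x\<in>icar A. iadd A (izero A) x = x \<and> iadd A (ineg A x) x = izero A) \<and>
     \<comment> \<open>vector space over 'k\<close>
     (\<forall>c. \<forall>x\<in>icar A. \<forall>y\<in>icar A. ism A c (iadd A x y) = iadd A (ism A c x) (ism A c y)) \<and>
     (\<forall>c d. \<forall>x\<in>icar A. ism A (c + d) x = iadd A (ism A c x) (ism A d x)) \<and>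
     (\<forall>c d. \<forall>x\<in>icar A. ism A (c * d) x = ism A c (ism A d x)) \<and>
     (\<forall>x\<in>icar A. ism A 1 x = x) \<and>
     \<comment> \<open>associative unital algebra\<close>
     (\<forall>x\<in>icar A. \<forall>y\<in>icar A. \<forall>z\<in>icar A. imul A (imul A x y) z = imul A x (imul A y z)) \<and>
     (\<forall>x\<in>icar A. imul A (ione A) x = x \<and> imul A x (ione A) = x) \<and>
     (\<forall>x\<in>icar A. \<forall>y\<in>icar A. \<forall>z\<in>icar A.
        imul A x (iadd A y z) = iadd A (imul A x y) (imul A x z) \<and>
        imul A (iadd A x y) z = iadd A (imul A x z) (imul A y z)) \<and>
     (\<forall>c. \<forall>x\<in>icar A. \<forall>y\<in>icar A.
        ism A c (imul A x y) = imul A (ism A c x) y \<and> ism A c (imul A x y) = imul A x (ism A c y)) \<and>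
     \<comment> \<open>idempotent q and invariance\<close>
     imul A (iq A) (iq A) = iq A \<and>
     (\<forall>x\<in>icar A. imul A (imul A (iq A) x) (iq A) = imul A (iq A) x)"

definition ibracket6 :: "('k::field, 'a) ialg \<Rightarrow> 'k \<Rightarrow> 'a \<Rightarrow> 'a \<Rightarrow> 'a" where
  "ibracket6 A k x y =
     (let sub = (\<lambda>a b. iadd A a (ineg A b)); m = imul A; q = iq A in
      sub (iadd A (iadd A (sub (sub (m x y) (m y x)) (m (m x y) q)) (m (m y x) q))
                  (ism A k (m (m x q) y)))
          (ism A k (m (m y q) x)))"

definition lie_hom_ialg ::
  "('k::field \<Rightarrow> 'l::ab_group_add \<Rightarrow> 'l) \<Rightarrow> ('l \<Rightarrow> 'l \<Rightarrow> 'l) \<Rightarrow> 'k \<Rightarrow> ('k, 'a) ialg \<Rightarrow> ('l \<Rightarrow> 'a) \<Rightarrow> bool" where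
  "lie_hom_ialg sL br k A f \<longleftrightarrow>
     (\<forall>x. f x \<in> icar A) \<and>
     (\<forall>x y. f (x + y) = iadd A (f x) (f y)) \<and>
     (\<forall>c x. f (sL c x) = ism A c (f x)) \<and>
     (\<forall>x y. f (br x y) = ibracket6 A k (f x) (f y))"

definition inv_alg_hom_to ::
  "('k::field \<Rightarrow> 'u::ring_1 \<Rightarrow> 'u) \<Rightarrow> 'u \<Rightarrow> ('k, 'a) ialg \<Rightarrow> ('u \<Rightarrow> 'a) \<Rightarrow> bool" where
  "inv_alg_hom_to sU q A \<phi> \<longleftrightarrow>
     (\<forall>x. \<phi> x \<in> icar A) \<and>
     (\<forall>x y. \<phi> (x + y) = iadd A (\<phi> x) (\<phi> y)) \<and>
     (\<forall>c x. \<phi> (sU c x) = ism A c (\<phi> x)) \<and>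
     (\<forall>x y. \<phi> (x * y) = imul A (\<phi> x) (\<phi> y)) \<and>
     \<phi> 1 = ione A \<and> \<phi> q = iq A"

definition lie_hom_U ::
  "('k::field \<Rightarrow> 'l::ab_group_add \<Rightarrow> 'l) \<Rightarrow> ('l \<Rightarrow> 'l \<Rightarrow> 'l) \<Rightarrow> 'k \<Rightarrow>
   ('k \<Rightarrow> 'u::ring_1 \<Rightarrow> 'u) \<Rightarrow> 'u \<Rightarrow> ('l \<Rightarrow> 'u) \<Rightarrow> bool" where
  "lie_hom_U sL br k sU q i \<longleftrightarrow>
     (\<forall>x y. i (x + y) = i x + i y) \<and>
     (\<forall>c x. i (sL c x) = sU c (i x)) \<and>
     (\<forall>x y. i (br x y) = bracket6 sU k q (i x) (i y))"

text \<open>The enveloping^{6-th} algebra ((U,q),i) of (L, k).  The universal property is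
quantified over all invariant algebras whose carrier lies in the type 'u of U
(HOL cannot quantify over all types).\<close>

definition enveloping6 ::
  "('k::field \<Rightarrow> 'l::ab_group_add \<Rightarrow> 'l) \<Rightarrow> ('l \<Rightarrow> 'l \<Rightarrow> 'l) \<Rightarrow> 'k \<Rightarrow>
   ('k \<Rightarrow> 'u::ring_1 \<Rightarrow> 'u) \<Rightarrow> 'u \<Rightarrow> ('l \<Rightarrow> 'u) \<Rightarrow> bool" where
  "enveloping6 sL br k sU q i \<longleftrightarrow>
     invariant_algebra sU q \<and> lie_hom_U sL br k sU q i \<and>
     (\<forall>(A :: ('k, 'u) ialg) f. is_invariant_ialg A \<and> lie_hom_ialg sL br k A f \<longrightarrow>
        (\<exists>!\<phi>. inv_alg_hom_to sU q A \<phi> \<and> (\<forall>x. \<phi> (i x) = f x)))"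

section \<open>Tensor products U \<otimes> U and U \<otimes> U \<otimes> U\<close>

text \<open>Standard construction: the free vector space on pairs (finitely supported
functions to 'k) modulo the subspace spanned by the bilinearity relations.
Elements of U \<otimes> U are represented by finitely supported functions
('u \<times> 'u \<Rightarrow> 'k); two representatives denote the same tensor iff their difference lies
in the relation subspace.\<close>

definition fscale :: "'k::field \<Rightarrow> ('p \<Rightarrow> 'k) \<Rightarrow> ('p \<Rightarrow> 'k)" where
  "fscale c F = (\<lambda>p. c * F p)"

definition fsupp :: "('p \<Rightarrow> 'k::zero) \<Rightarrow> 'p set" where
  "fsupp F = {p. F p \<noteq> 0}"

definition tens :: "'a \<Rightarrow> 'b \<Rightarrow> ('a \<times> 'b \<Rightarrow> 'k::field)" where
  "tens a b = (\<lambda>p. if p = (a, b) then 1 else 0)"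

definition tens3 :: "'a \<Rightarrow> 'a \<Rightarrow> 'a \<Rightarrow> ('a \<times> 'a \<times> 'a \<Rightarrow> 'k::field)" where
  "tens3 a b c = (\<lambda>p. if p = (a, b, c) then 1 else 0)"

definition tensor_rel2 :: "('k::field \<Rightarrow> 'u::ab_group_add \<Rightarrow> 'u) \<Rightarrow> ('u \<times> 'u \<Rightarrow> 'k) set" where
  "tensor_rel2 sU = module.span fscale
     ({tens (a + a') b - tens a b - tens a' b | a a' b. True} \<union>
      {tens a (b + b') - tens a b - tens a b' | a b b'. True} \<union>
      {tens (sU c a) b - fscale c (tens a b) | c a b. True} \<union>
      {tens a (sU c b) - fscale c (tens a b) | c a b. True})"

definition tensor_rel3 :: "('k::field \<Rightarrow> 'u::ab_group_add \<Rightarrow> 'u) \<Rightarrow> ('u \<times> 'u \<times> 'u \<Rightarrow> 'k) set" where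
  "tensor_rel3 sU = module.span fscale
     ({tens3 (a + a') b d - tens3 a b d - tens3 a' b d | a a' b d. True} \<union>
      {tens3 a (b + b') d - tens3 a b d - tens3 a b' d | a b b' d. True} \<union>
      {tens3 a b (d + d') - tens3 a b d - tens3 a b d' | a b d d'. True} \<union>
      {tens3 (sU c a) b d - fscale c (tens3 a b d) | c a b d. True} \<union>
      {tens3 a (sU c b) d - fscale c (tens3 a b d) | c a b d. True} \<union>
      {tens3 a b (sU c d) - fscale c (tens3 a b d) | c a b d. True})"

definition teq2 :: "('k::field \<Rightarrow> 'u::ab_group_add \<Rightarrow> 'u) \<Rightarrow> ('u \<times> 'u \<Rightarrow> 'k) \<Rightarrow> ('u \<times> 'u \<Rightarrow> 'k) \<Rightarrow> bool" where
  "teq2 sU F G \<longleftrightarrow> F - G \<in> tensor_rel2 sU"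

definition teq3 :: "('k::field \<Rightarrow> 'u::ab_group_add \<Rightarrow> 'u) \<Rightarrow> ('u \<times> 'u \<times> 'u \<Rightarrow> 'k) \<Rightarrow> ('u \<times> 'u \<times> 'u \<Rightarrow> 'k) \<Rightarrow> bool" where
  "teq3 sU F G \<longleftrightarrow> F - G \<in> tensor_rel3 sU"

definition tmult2 :: "('u::ring_1 \<times> 'u \<Rightarrow> 'k::field) \<Rightarrow> ('u \<times> 'u \<Rightarrow> 'k) \<Rightarrow> ('u \<times> 'u \<Rightarrow> 'k)" where
  "tmult2 F G = (\<lambda>p. \<Sum>(a, b)\<in>fsupp F. \<Sum>(c, d)\<in>fsupp G.
                      if p = (a * c, b * d) then F (a, b) * G (c, d) else 0)"

definition id_tensor :: "('u \<Rightarrow> ('u \<times> 'u \<Rightarrow> 'k::field)) \<Rightarrow> ('u \<times> 'u \<Rightarrow> 'k) \<Rightarrow> ('u \<times> 'u \<times> 'u \<Rightarrow> 'k)" where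
  "id_tensor D F = (\<lambda>(x, y, z). \<Sum>(a, b)\<in>fsupp F. if x = a then F (a, b) * D b (y, z) else 0)"

definition tensor_id :: "('u \<Rightarrow> ('u \<times> 'u \<Rightarrow> 'k::field)) \<Rightarrow> ('u \<times> 'u \<Rightarrow> 'k) \<Rightarrow> ('u \<times> 'u \<times> 'u \<Rightarrow> 'k)" where
  "tensor_id D F = (\<lambda>(x, y, z). \<Sum>(a, b)\<in>fsupp F. if z = b then F (a, b) * D a (x, y) else 0)"

text \<open>(\<epsilon> \<otimes> id) and (id \<otimes> \<epsilon>), composed with the canonical identifications
k \<otimes> U = U = U \<otimes> k (c \<otimes> u \<mapsto> c u).\<close>

definition eps_tensor_id :: "('k::field \<Rightarrow> 'u::ab_group_add \<Rightarrow> 'u) \<Rightarrow> ('u \<Rightarrow> 'k) \<Rightarrow> ('u \<times> 'u \<Rightarrow> 'k) \<Rightarrow> 'u" where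
  "eps_tensor_id sU e F = (\<Sum>(a, b)\<in>fsupp F. sU (F (a, b) * e a) b)"

definition id_tensor_eps :: "('k::field \<Rightarrow> 'u::ab_group_add \<Rightarrow> 'u) \<Rightarrow> ('u \<Rightarrow> 'k) \<Rightarrow> ('u \<times> 'u \<Rightarrow> 'k) \<Rightarrow> 'u" where
  "id_tensor_eps sU e F = (\<Sum>(a, b)\<in>fsupp F. sU (F (a, b) * e b) a)"

definition m_tensor :: "('k::field \<Rightarrow> 'u::ring_1 \<Rightarrow> 'u) \<Rightarrow> ('u \<Rightarrow> 'u) \<Rightarrow> ('u \<Rightarrow> 'u) \<Rightarrow> ('u \<times> 'u \<Rightarrow> 'k) \<Rightarrow> 'u" where
  "m_tensor sU f g F = (\<Sum>(a, b)\<in>fsupp F. sU (F (a, b)) (f a * g b))"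

text \<open>H = 'u with m = (*), u = (\<lambda>c. sU c 1); \<Delta> is given by D (representatives in
U \<otimes> U), \<epsilon> by e, \<sigma> by s.\<close>

definition bialgebra_sigma ::
  "('k::field \<Rightarrow> 'u::ring_1 \<Rightarrow> 'u) \<Rightarrow> ('u \<Rightarrow> ('u \<times> 'u \<Rightarrow> 'k)) \<Rightarrow> ('u \<Rightarrow> 'k) \<Rightarrow> ('u \<Rightarrow> 'u) \<Rightarrow> bool" where
  "bialgebra_sigma sU D e s \<longleftrightarrow>
     \<comment> \<open>(H, m, u) associative unital algebra\<close>
     k_algebra sU \<and>
     \<comment> \<open>\<sigma> linear\<close>
     (\<forall>x y. s (x + y) = s x + s y) \<and> (\<forall>c x. s (sU c x) = sU c (s x)) \<and>
     \<comment> \<open>\<Delta> a linear map H \<rightarrow> H \<otimes> H\<close>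
     (\<forall>h. finite (fsupp (D h))) \<and>
     (\<forall>x y. teq2 sU (D (x + y)) (D x + D y)) \<and>
     (\<forall>c x. teq2 sU (D (sU c x)) (fscale c (D x))) \<and>
     \<comment> \<open>\<epsilon> linear\<close>
     (\<forall>x y. e (x + y) = e x + e y) \<and> (\<forall>c x. e (sU c x) = c * e x) \<and>
     \<comment> \<open>coassociativity\<close>
     (\<forall>h. teq3 sU (id_tensor D (D h)) (tensor_id D (D h))) \<and>
     \<comment> \<open>\<sigma>-counit\<close>
     (\<forall>h. eps_tensor_id sU e (D h) = s h) \<and>
     (\<forall>h. id_tensor_eps sU e (D h) = s h) \<and>
     \<comment> \<open>\<Delta> and \<epsilon> unital algebra homomorphisms\<close>
     (\<forall>x y. teq2 sU (D (x * y)) (tmult2 (D x) (D y))) \<and> teq2 sU (D 1) (tens 1 1) \<and>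
     (\<forall>x y. e (x * y) = e x * e y) \<and> e 1 = 1"

definition hopf_like ::
  "('k::field \<Rightarrow> 'u::ring_1 \<Rightarrow> 'u) \<Rightarrow> ('u \<Rightarrow> ('u \<times> 'u \<Rightarrow> 'k)) \<Rightarrow> ('u \<Rightarrow> 'k) \<Rightarrow> ('u \<Rightarrow> 'u) \<Rightarrow> ('u \<Rightarrow> 'u) \<Rightarrow> bool" where
  "hopf_like sU D e s S \<longleftrightarrow>
     bialgebra_sigma sU D e s \<and>
     (\<forall>x y. S (x + y) = S x + S y) \<and> (\<forall>c x. S (sU c x) = sU c (S x)) \<and>
     (\<forall>h. m_tensor sU S id (D h) = sU (e (S h)) 1) \<and>
     (\<forall>h. m_tensor sU id S (D h) = sU (e (S h)) 1)"

definition invariant_antihom :: "('k::field \<Rightarrow> 'u::ring_1 \<Rightarrow> 'u) \<Rightarrow> 'u \<Rightarrow> ('u \<Rightarrow> 'u) \<Rightarrow> bool" where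
  "invariant_antihom sU q S \<longleftrightarrow>
     (\<forall>x y. S (x + y) = S x + S y) \<and> (\<forall>c x. S (sU c x) = sU c (S x)) \<and>
     (\<forall>a b. S (a * b) = S b * S a) \<and> S 1 = 1 \<and> S q = 1 - q"

end

theory Submission
  imports Defs
begin

(* Such a representative F is read through
   its pairing  <F, beta> = sum_p F(p) beta(p)  with multilinear maps beta: the pairing
   kills the relations, so it is well defined on tensors, and conversely trilinear
   scalar forms separate U \<otimes> U \<otimes> U, so an identity of 3-tensors may be checked
   against every trilinear form.

   Every axiom then becomes an identity between maps U \<rightarrow> W obtained by pairing
   Delta(h) with a fixed bilinear map.  These maps are linear, behave well on products
   because Delta is multiplicative, and are known explicitly on the generators 1, q and
   i(a); the universal property shows that U is generated by exactly these elements as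
   an algebra, so each identity follows by induction over the generated subalgebra. *)

section \<open>Finitely supported functions and their pairing with multilinear maps\<close>

lemma vector_space_fscale: "vector_space (fscale :: 'k::field \<Rightarrow> ('p \<Rightarrow> 'k) \<Rightarrow> _)"
  by unfold_locales (auto simp: fscale_def fun_eq_iff algebra_simps)

lemma vector_space_field: "vector_space ((*) :: 'k::field \<Rightarrow> 'k \<Rightarrow> 'k)"
  by unfold_locales (auto simp: algebra_simps)

lemma fsupp_plus: "fsupp (F + G :: _ \<Rightarrow> 'k::field) \<subseteq> fsupp F \<union> fsupp G"
  by (auto simp: fsupp_def)

lemma fsupp_minus: "fsupp (F - G :: _ \<Rightarrow> 'k::field) \<subseteq> fsupp F \<union> fsupp G"
  by (auto simp: fsupp_def)

lemma fsupp_fscale: "fsupp (fscale c F :: _ \<Rightarrow> 'k::field) \<subseteq> fsupp F"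
  by (auto simp: fsupp_def fscale_def)

lemma fsupp_tens: "fsupp (tens a b :: _ \<Rightarrow> 'k::field) = {(a, b)}"
  by (auto simp: fsupp_def tens_def)

lemma finite_fsupp_plus [simp]:
  "finite (fsupp F) \<Longrightarrow> finite (fsupp G) \<Longrightarrow> finite (fsupp (F + G :: _ \<Rightarrow> 'k::field))"
  by (meson finite_UnI finite_subset fsupp_plus)

lemma finite_fsupp_minus [simp]:
  "finite (fsupp F) \<Longrightarrow> finite (fsupp G) \<Longrightarrow> finite (fsupp (F - G :: _ \<Rightarrow> 'k::field))"
  by (meson finite_UnI finite_subset fsupp_minus)

lemma finite_fsupp_fscale [simp]:
  "finite (fsupp F) \<Longrightarrow> finite (fsupp (fscale c F :: _ \<Rightarrow> 'k::field))"
  by (meson finite_subset fsupp_fscale)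

lemma finite_fsupp_tens [simp]: "finite (fsupp (tens a b :: _ \<Rightarrow> 'k::field))"
  by (simp add: fsupp_tens)

lemma fsupp_tmult2:
  fixes F G :: "'u::ring_1 \<times> 'u \<Rightarrow> 'k::field"
  shows "fsupp (tmult2 F G) \<subseteq> (\<lambda>(p, r). (fst p * fst r, snd p * snd r)) ` (fsupp F \<times> fsupp G)"
proof
  fix t assume "t \<in> fsupp (tmult2 F G)"
  moreover have "tmult2 F G t = (\<Sum>p\<in>fsupp F. \<Sum>r\<in>fsupp G.
      if t = (fst p * fst r, snd p * snd r) then F p * G r else 0)"
    unfolding tmult2_def by (intro sum.cong refl) (simp only: case_prod_unfold prod.collapse)
  ultimately have "(\<Sum>p\<in>fsupp F. \<Sum>r\<in>fsupp G.
      if t = (fst p * fst r, snd p * snd r) then F p * G r else 0) \<noteq> 0"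
    by (simp add: fsupp_def)
  then obtain p where p: "p \<in> fsupp F"
    and "(\<Sum>r\<in>fsupp G. if t = (fst p * fst r, snd p * snd r) then F p * G r else 0) \<noteq> 0"
    by (rule sum.not_neutral_contains_not_neutral)
  from this(2) obtain r where "r \<in> fsupp G" "(if t = (fst p * fst r, snd p * snd r) then F p * G r else 0) \<noteq> 0"
    by (rule sum.not_neutral_contains_not_neutral)
  with p show "t \<in> (\<lambda>(p, r). (fst p * fst r, snd p * snd r)) ` (fsupp F \<times> fsupp G)"
    by (intro image_eqI[where x = "(p, r)"]) (auto split: if_splits)
qed

lemma finite_fsupp_tmult2 [simp]:
  fixes F G :: "'u::ring_1 \<times> 'u \<Rightarrow> 'k::field"
  shows "finite (fsupp F) \<Longrightarrow> finite (fsupp G) \<Longrightarrow> finite (fsupp (tmult2 F G))"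
  by (rule finite_subset[OF fsupp_tmult2]) simp

definition pairing :: "('k::field \<Rightarrow> 'w::ab_group_add \<Rightarrow> 'w) \<Rightarrow> ('p \<Rightarrow> 'k) \<Rightarrow> ('p \<Rightarrow> 'w) \<Rightarrow> 'w" where
  "pairing sW F \<beta> = (\<Sum>p\<in>fsupp F. sW (F p) (\<beta> p))"

definition bilinear_map ::
  "('k::field \<Rightarrow> 'u::ab_group_add \<Rightarrow> 'u) \<Rightarrow> ('k \<Rightarrow> 'w::ab_group_add \<Rightarrow> 'w) \<Rightarrow> ('u \<times> 'u \<Rightarrow> 'w) \<Rightarrow> bool" where
  "bilinear_map sU sW \<beta> \<longleftrightarrow>
    (\<forall>a a' b. \<beta> (a + a', b) = \<beta> (a, b) + \<beta> (a', b)) \<and>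
    (\<forall>a b b'. \<beta> (a, b + b') = \<beta> (a, b) + \<beta> (a, b')) \<and>
    (\<forall>c a b. \<beta> (sU c a, b) = sW c (\<beta> (a, b))) \<and>
    (\<forall>c a b. \<beta> (a, sU c b) = sW c (\<beta> (a, b)))"

lemma bilinear_mapD:
  assumes "bilinear_map sU sW \<beta>"
  shows "\<beta> (a + a', b) = \<beta> (a, b) + \<beta> (a', b)" "\<beta> (a, b + b') = \<beta> (a, b) + \<beta> (a, b')"
    "\<beta> (sU c a, b) = sW c (\<beta> (a, b))" "\<beta> (a, sU c b) = sW c (\<beta> (a, b))"
  using assms unfolding bilinear_map_def by auto

context
  fixes sW :: "'k::field \<Rightarrow> 'w::ab_group_add \<Rightarrow> 'w"
  assumes vsW: "vector_space sW"
begin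

interpretation W: vector_space sW by (rule vsW)

lemma pairing_superset:
  assumes "finite T" "fsupp F \<subseteq> T"
  shows "pairing sW F \<beta> = (\<Sum>p\<in>T. sW (F p) (\<beta> p))"
  unfolding pairing_def
  by (rule sum.mono_neutral_left) (use assms in \<open>auto simp: fsupp_def\<close>)

lemma pairing_add:
  assumes "finite (fsupp F)" "finite (fsupp G)"
  shows "pairing sW (F + G) \<beta> = pairing sW F \<beta> + pairing sW G \<beta>"
proof -
  let ?T = "fsupp F \<union> fsupp G"
  have "pairing sW (F + G) \<beta> = (\<Sum>p\<in>?T. sW ((F + G) p) (\<beta> p))"
    by (rule pairing_superset) (use assms fsupp_plus[of F G] in blast)+
  also have "\<dots> = (\<Sum>p\<in>?T. sW (F p) (\<beta> p)) + (\<Sum>p\<in>?T. sW (G p) (\<beta> p))"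
    by (simp add: W.scale_left_distrib sum.distrib)
  also have "\<dots> = pairing sW F \<beta> + pairing sW G \<beta>"
    by (subst (1 2) pairing_superset[of ?T]) (use assms in auto)
  finally show ?thesis .
qed

lemma pairing_diff:
  assumes "finite (fsupp F)" "finite (fsupp G)"
  shows "pairing sW (F - G) \<beta> = pairing sW F \<beta> - pairing sW G \<beta>"
proof -
  let ?T = "fsupp F \<union> fsupp G"
  have "pairing sW (F - G) \<beta> = (\<Sum>p\<in>?T. sW ((F - G) p) (\<beta> p))"
    by (rule pairing_superset) (use assms fsupp_minus[of F G] in blast)+
  also have "\<dots> = (\<Sum>p\<in>?T. sW (F p) (\<beta> p)) - (\<Sum>p\<in>?T. sW (G p) (\<beta> p))"
    by (simp add: W.scale_left_diff_distrib sum_subtractf)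
  also have "\<dots> = pairing sW F \<beta> - pairing sW G \<beta>"
    by (subst (1 2) pairing_superset[of ?T]) (use assms in auto)
  finally show ?thesis .
qed

lemma pairing_fscale:
  assumes "finite (fsupp F)"
  shows "pairing sW (fscale c F) \<beta> = sW c (pairing sW F \<beta>)"
proof -
  have "pairing sW (fscale c F) \<beta> = (\<Sum>p\<in>fsupp F. sW (fscale c F p) (\<beta> p))"
    by (rule pairing_superset) (use assms fsupp_fscale[of c F] in blast)+
  then show ?thesis
    by (simp add: pairing_def W.scale_sum_right fscale_def)
qed

lemma pairing_tens: "pairing sW (tens a b) \<beta> = \<beta> (a, b)"
  by (simp add: pairing_def fsupp_tens) (simp add: tens_def)

lemma pairing_map_add: "pairing sW F (\<lambda>p. f p + g p) = pairing sW F f + pairing sW F g"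
  by (simp add: pairing_def W.scale_right_distrib sum.distrib)

lemma pairing_map_scale: "pairing sW F (\<lambda>p. sW c (f p)) = sW c (pairing sW F f)"
  by (simp add: pairing_def W.scale_sum_right mult.commute)

lemma pairing_swap:
  "pairing sW F (\<lambda>p. pairing sW G (\<lambda>r. f p r)) = pairing sW G (\<lambda>r. pairing sW F (\<lambda>p. f p r))"
proof -
  have "pairing sW F (\<lambda>p. pairing sW G (\<lambda>r. f p r)) =
        (\<Sum>p\<in>fsupp F. \<Sum>r\<in>fsupp G. sW (F p * G r) (f p r))"
    by (simp add: pairing_def W.scale_sum_right)
  also have "\<dots> = (\<Sum>r\<in>fsupp G. \<Sum>p\<in>fsupp F. sW (F p * G r) (f p r))"
    by (rule sum.swap)
  also have "\<dots> = pairing sW G (\<lambda>r. pairing sW F (\<lambda>p. f p r))"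
    by (simp add: pairing_def W.scale_sum_right mult.commute)
  finally show ?thesis .
qed

text \<open>The bilinearity relations pair to zero with every bilinear map; hence the pairing
  is well defined on U \<otimes> U.\<close>

lemma tensor_rel2_annihilated:
  assumes "R \<in> tensor_rel2 sU" "bilinear_map sU sW \<beta>"
  shows "finite (fsupp R) \<and> pairing sW R \<beta> = 0"
proof -
  interpret V: vector_space "fscale :: 'k \<Rightarrow> ('u \<times> 'u \<Rightarrow> 'k) \<Rightarrow> _" by (rule vector_space_fscale)
  from assms(1) show ?thesis unfolding tensor_rel2_def
  proof (induct rule: V.span_induct_alt)
    case base then show ?case by (simp add: pairing_def fsupp_def zero_fun_def)
  next
    case (step c x y)
    have fin_x: "finite (fsupp x)"
      using step(1) by auto
    have "pairing sW x \<beta> = 0"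
      using step(1) assms(2) fin_x unfolding bilinear_map_def
      by (auto simp: pairing_diff pairing_tens pairing_fscale fsupp_tens fsupp_plus
          intro: finite_subset[OF fsupp_minus] finite_subset[OF fsupp_fscale])
    moreover have "finite (fsupp (fscale c x + y))"
      using fin_x step(2) by simp
    moreover have "pairing sW (fscale c x + y) \<beta> = pairing sW (fscale c x) \<beta> + pairing sW y \<beta>"
      using step(2) fin_x by (intro pairing_add) auto
    ultimately show ?case using step(2) fin_x
      by (simp only: pairing_fscale) simp
  qed
qed

lemma pairing_teq2:
  assumes "teq2 sU F G" "finite (fsupp F)" "finite (fsupp G)" "bilinear_map sU sW \<beta>"
  shows "pairing sW F \<beta> = pairing sW G \<beta>"
  using tensor_rel2_annihilated[of "F - G" sU \<beta>] assms pairing_diff[OF assms(2,3)]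
  unfolding teq2_def by simp

lemma pairing_tmult2:
  fixes F G :: "'u::ring_1 \<times> 'u \<Rightarrow> 'k"
  assumes fin_F: "finite (fsupp F)" and fin_G: "finite (fsupp G)"
  shows "pairing sW (tmult2 F G) \<beta> =
         pairing sW F (\<lambda>p. pairing sW G (\<lambda>r. \<beta> (fst p * fst r, snd p * snd r)))"
proof -
  define m :: "'u \<times> 'u \<Rightarrow> 'u \<times> 'u \<Rightarrow> 'u \<times> 'u" where "m = (\<lambda>p r. (fst p * fst r, snd p * snd r))"
  define T where "T = (\<lambda>(p, r). m p r) ` (fsupp F \<times> fsupp G)"
  have fin_T: "finite T" unfolding T_def using fin_F fin_G by simp
  have tm: "tmult2 F G t = (\<Sum>p\<in>fsupp F. \<Sum>r\<in>fsupp G. if t = m p r then F p * G r else 0)" for t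
    unfolding tmult2_def m_def by (intro sum.cong refl) (simp only: case_prod_unfold prod.collapse)
  have "pairing sW (tmult2 F G) \<beta> = (\<Sum>t\<in>T. sW (tmult2 F G t) (\<beta> t))"
    using fin_T fsupp_tmult2[of F G] unfolding T_def m_def by (rule pairing_superset)
  also have "\<dots> = (\<Sum>t\<in>T. \<Sum>p\<in>fsupp F. \<Sum>r\<in>fsupp G. if t = m p r then sW (F p * G r) (\<beta> t) else 0)"
    unfolding tm W.scale_sum_left by (intro sum.cong refl) auto
  also have "\<dots> = (\<Sum>p\<in>fsupp F. \<Sum>r\<in>fsupp G. \<Sum>t\<in>T. if t = m p r then sW (F p * G r) (\<beta> t) else 0)"
    by (subst sum.swap, rule sum.cong[OF refl], rule sum.swap)
  also have "\<dots> = (\<Sum>p\<in>fsupp F. \<Sum>r\<in>fsupp G. sW (F p * G r) (\<beta> (m p r)))"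
    using fin_T by (intro sum.cong refl) (auto simp: T_def sum.delta')
  also have "\<dots> = pairing sW F (\<lambda>p. pairing sW G (\<lambda>r. \<beta> (m p r)))"
    unfolding pairing_def by (simp add: W.scale_sum_right)
  finally show ?thesis unfolding m_def .
qed

end

lemma pairing_mult_left:
  assumes "k_algebra sU"
  shows "pairing sU F (\<lambda>p. u * f p) = u * pairing sU F f"
proof -
  have "sU c (x * y) = x * sU c y" for c x y using assms unfolding k_algebra_def by metis
  then show ?thesis unfolding pairing_def by (simp only: sum_distrib_left)
qed

lemma pairing_mult_right:
  assumes "k_algebra sU"
  shows "pairing sU F (\<lambda>p. f p * w) = pairing sU F f * w"
proof -
  have "sU c (x * y) = sU c x * y" for c x y using assms unfolding k_algebra_def by metis
  then show ?thesis unfolding pairing_def by (simp only: sum_distrib_right)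
qed

section \<open>Trilinear forms separate U \<otimes> U \<otimes> U\<close>

definition trilinear_form :: "('k::field \<Rightarrow> 'u::ab_group_add \<Rightarrow> 'u) \<Rightarrow> ('u \<times> 'u \<times> 'u \<Rightarrow> 'k) \<Rightarrow> bool" where
  "trilinear_form sU \<gamma> \<longleftrightarrow>
    (\<forall>a a' b c. \<gamma> (a + a', b, c) = \<gamma> (a, b, c) + \<gamma> (a', b, c)) \<and>
    (\<forall>a b b' c. \<gamma> (a, b + b', c) = \<gamma> (a, b, c) + \<gamma> (a, b', c)) \<and>
    (\<forall>a b c c'. \<gamma> (a, b, c + c') = \<gamma> (a, b, c) + \<gamma> (a, b, c')) \<and>
    (\<forall>t a b c. \<gamma> (sU t a, b, c) = t * \<gamma> (a, b, c)) \<and>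
    (\<forall>t a b c. \<gamma> (a, sU t b, c) = t * \<gamma> (a, b, c)) \<and>
    (\<forall>t a b c. \<gamma> (a, b, sU t c) = t * \<gamma> (a, b, c))"

lemma trilinear_formD:
  assumes "trilinear_form sU \<gamma>"
  shows "\<gamma> (a + a', b, c) = \<gamma> (a, b, c) + \<gamma> (a', b, c)"
    "\<gamma> (a, b + b', c) = \<gamma> (a, b, c) + \<gamma> (a, b', c)"
    "\<gamma> (a, b, c + c') = \<gamma> (a, b, c) + \<gamma> (a, b, c')"
    "\<gamma> (sU t a, b, c) = t * \<gamma> (a, b, c)"
    "\<gamma> (a, sU t b, c) = t * \<gamma> (a, b, c)"
    "\<gamma> (a, b, sU t c) = t * \<gamma> (a, b, c)"
  using assms unfolding trilinear_form_def by auto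

lemma trilinear_formD_pair:
  assumes "trilinear_form sU \<gamma>"
  shows "\<gamma> (a + a', r) = \<gamma> (a, r) + \<gamma> (a', r)" "\<gamma> (sU t a, r) = t * \<gamma> (a, r)"
  using trilinear_formD(1,4)[OF assms, of _ _ "fst r" "snd r"] by simp_all

text \<open>Over a field, a vector outside a subspace is detected by a linear functional
  vanishing on the subspace (extend a basis of the subspace by the vector).\<close>

lemma separating_functional:
  fixes scale :: "'k::field \<Rightarrow> 'v::ab_group_add \<Rightarrow> 'v"
  assumes vs: "vector_space scale" and W: "module.subspace scale W" and X: "X \<notin> W"
  obtains \<phi> where "Vector_Spaces.linear scale (*) \<phi>" "\<And>w. w \<in> W \<Longrightarrow> \<phi> w = 0" "\<phi> X = 1"
proof -
  interpret V: vector_space scale by (rule vs)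
  interpret P: vector_space_pair scale "(*) :: 'k \<Rightarrow> 'k \<Rightarrow> 'k"
    by unfold_locales (auto simp: algebra_simps)
  obtain B where B: "B \<subseteq> W" "V.independent B" "W \<subseteq> V.span B"
    by (rule V.maximal_independent_subset)
  have X_B: "X \<notin> V.span B"
    using X V.span_minimal[OF B(1) W] by blast
  obtain \<phi> where lin: "Vector_Spaces.linear scale (*) \<phi>"
    and \<phi>: "\<forall>b\<in>insert X B. \<phi> b = (if b = X then 1 else 0)"
    using P.linear_independent_extend[OF V.independent_insertI[OF X_B B(2)],
        of "\<lambda>b. if b = X then 1 else 0"] by blast
  interpret L: Vector_Spaces.linear scale "(*) :: 'k \<Rightarrow> 'k \<Rightarrow> 'k" \<phi> by (rule lin)
  have "\<phi> b = 0" if "b \<in> B" for b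
    using \<phi> that X_B V.span_base[OF that] by auto
  then have "\<phi> w = 0" if "w \<in> W" for w
    using L.eq_0_on_span B(3) that by blast
  with lin \<phi> show ?thesis using that by simp
qed

lemma tensor_rel3_generators:
  fixes sU :: "'k::field \<Rightarrow> 'u::ab_group_add \<Rightarrow> 'u"
  shows "tens3 (a + a') b d - tens3 a b d - tens3 a' b d \<in> tensor_rel3 sU"
    and "tens3 a (b + b') d - tens3 a b d - tens3 a b' d \<in> tensor_rel3 sU"
    and "tens3 a b (d + d') - tens3 a b d - tens3 a b d' \<in> tensor_rel3 sU"
    and "tens3 (sU c a) b d - fscale c (tens3 a b d) \<in> tensor_rel3 sU"
    and "tens3 a (sU c b) d - fscale c (tens3 a b d) \<in> tensor_rel3 sU"
    and "tens3 a b (sU c d) - fscale c (tens3 a b d) \<in> tensor_rel3 sU"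
proof -
  interpret V: vector_space "fscale :: 'k \<Rightarrow> ('u \<times> 'u \<times> 'u \<Rightarrow> 'k) \<Rightarrow> _" by (rule vector_space_fscale)
  show "tens3 (a + a') b d - tens3 a b d - tens3 a' b d \<in> tensor_rel3 sU"
    unfolding tensor_rel3_def by (rule V.span_base, (rule UnI1)+) blast
  show "tens3 a (b + b') d - tens3 a b d - tens3 a b' d \<in> tensor_rel3 sU"
    unfolding tensor_rel3_def by (rule V.span_base, rule UnI1, rule UnI1, rule UnI1, rule UnI1, rule UnI2) blast
  show "tens3 a b (d + d') - tens3 a b d - tens3 a b d' \<in> tensor_rel3 sU"
    unfolding tensor_rel3_def by (rule V.span_base, rule UnI1, rule UnI1, rule UnI1, rule UnI2) blast
  show "tens3 (sU c a) b d - fscale c (tens3 a b d) \<in> tensor_rel3 sU"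
    unfolding tensor_rel3_def by (rule V.span_base, rule UnI1, rule UnI1, rule UnI2) blast
  show "tens3 a (sU c b) d - fscale c (tens3 a b d) \<in> tensor_rel3 sU"
    unfolding tensor_rel3_def by (rule V.span_base, rule UnI1, rule UnI2) blast
  show "tens3 a b (sU c d) - fscale c (tens3 a b d) \<in> tensor_rel3 sU"
    unfolding tensor_rel3_def by (rule V.span_base, rule UnI2) blast
qed

lemma trilinear_form_of_functional:
  fixes sU :: "'k::field \<Rightarrow> 'u::ab_group_add \<Rightarrow> 'u" and \<phi> :: "('u \<times> 'u \<times> 'u \<Rightarrow> 'k) \<Rightarrow> 'k"
  assumes lin: "Vector_Spaces.linear fscale (*) \<phi>"
    and vanish: "\<And>r. r \<in> tensor_rel3 sU \<Longrightarrow> \<phi> r = 0"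
  shows "trilinear_form sU (\<lambda>t. \<phi> (tens3 (fst t) (fst (snd t)) (snd (snd t))))"
proof -
  interpret L: Vector_Spaces.linear fscale "(*) :: 'k::field \<Rightarrow> 'k \<Rightarrow> 'k" \<phi> by (rule lin)
  note zero = tensor_rel3_generators[THEN vanish]
  show ?thesis
    using zero unfolding trilinear_form_def by (simp add: L.diff L.add L.scale diff_diff_eq)
qed

lemma pairing_functional:
  fixes X :: "'u \<times> 'u \<times> 'u \<Rightarrow> 'k::field"
  assumes lin: "Vector_Spaces.linear fscale (*) \<phi>" and fin: "finite (fsupp X)"
  shows "\<phi> X = pairing (*) X (\<lambda>t. \<phi> (tens3 (fst t) (fst (snd t)) (snd (snd t))))"
proof -
  interpret L: Vector_Spaces.linear fscale "(*) :: 'k \<Rightarrow> 'k \<Rightarrow> 'k" \<phi> by (rule lin)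
  have unit: "tens3 (fst t) (fst (snd t)) (snd (snd t)) = (\<lambda>s. if s = t then 1 else 0)"
    for t :: "'u \<times> 'u \<times> 'u"
    unfolding tens3_def by (rule ext) simp
  have restrict: "\<phi> (\<lambda>s. if s \<in> A then X s else 0) =
      (\<Sum>t\<in>A. X t * \<phi> (tens3 (fst t) (fst (snd t)) (snd (snd t))))" if "finite A" for A
    using that
  proof (induct A rule: finite_induct)
    case empty
    have "(\<lambda>s. if s \<in> {} then X s else 0) = fscale 0 X" by (simp add: fscale_def)
    then show ?case by (simp add: L.scale)
  next
    case (insert a A)
    have "(\<lambda>s. if s \<in> insert a A then X s else 0) =
        (\<lambda>s. if s \<in> A then X s else 0) + fscale (X a) (tens3 (fst a) (fst (snd a)) (snd (snd a)))"
      using insert(2) unfolding unit by (auto simp: fscale_def fun_eq_iff)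
    then show ?case using insert by (simp add: L.add L.scale)
  qed
  have "(\<lambda>s. if s \<in> fsupp X then X s else 0) = X" by (auto simp: fsupp_def fun_eq_iff)
  then show ?thesis using restrict[OF fin] by (simp add: pairing_def)
qed

lemma tensor_rel3_separation:
  fixes X :: "'u::ab_group_add \<times> 'u \<times> 'u \<Rightarrow> 'k::field" and sU :: "'k \<Rightarrow> 'u \<Rightarrow> 'u"
  assumes fin: "finite (fsupp X)" and zero: "\<And>\<gamma>. trilinear_form sU \<gamma> \<Longrightarrow> pairing (*) X \<gamma> = 0"
  shows "X \<in> tensor_rel3 sU"
proof (rule ccontr)
  interpret V: vector_space "fscale :: 'k \<Rightarrow> ('u \<times> 'u \<times> 'u \<Rightarrow> 'k) \<Rightarrow> _" by (rule vector_space_fscale)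
  assume X: "X \<notin> tensor_rel3 sU"
  have "V.subspace (tensor_rel3 sU)" unfolding tensor_rel3_def by (rule V.subspace_span)
  then obtain \<phi> where lin: "Vector_Spaces.linear fscale (*) \<phi>"
    and vanish: "\<And>r. r \<in> tensor_rel3 sU \<Longrightarrow> \<phi> r = 0" and one: "\<phi> X = 1"
    by (rule separating_functional[OF vector_space_fscale _ X]) blast
  have "\<phi> X = 0"
    using pairing_functional[OF lin fin] zero[OF trilinear_form_of_functional[OF lin vanish]] by simp
  with one show False by simp
qed

section \<open>U is generated by 1, q and the image of i\<close>

inductive_set generated :: "('k::field \<Rightarrow> 'u::ring_1 \<Rightarrow> 'u) \<Rightarrow> 'u \<Rightarrow> ('l \<Rightarrow> 'u) \<Rightarrow> 'u set"
  for sU q i where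
  generated_one: "1 \<in> generated sU q i"
| generated_q: "q \<in> generated sU q i"
| generated_i: "i a \<in> generated sU q i"
| generated_add: "x \<in> generated sU q i \<Longrightarrow> y \<in> generated sU q i \<Longrightarrow> x + y \<in> generated sU q i"
| generated_smult: "x \<in> generated sU q i \<Longrightarrow> sU c x \<in> generated sU q i"
| generated_mult: "x \<in> generated sU q i \<Longrightarrow> y \<in> generated sU q i \<Longrightarrow> x * y \<in> generated sU q i"

lemma generated_zero:
  assumes "vector_space sU"
  shows "0 \<in> generated sU q i"
proof -
  interpret vector_space sU by fact
  have "sU 0 1 \<in> generated sU q i" by (rule generated_smult[OF generated_one])
  then show ?thesis by simp
qed

lemma generated_uminus:
  assumes "vector_space sU" and "x \<in> generated sU q i"
  shows "- x \<in> generated sU q i"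
proof -
  interpret vector_space sU by fact
  have "sU (- 1) x \<in> generated sU q i" by (rule generated_smult[OF assms(2)])
  then show ?thesis by (simp add: scale_minus_left)
qed

lemma invariant_ialg_subset:
  assumes inv: "invariant_algebra sU q"
    and C: "0 \<in> C" "1 \<in> C" "q \<in> C" "\<And>x y. x \<in> C \<Longrightarrow> y \<in> C \<Longrightarrow> x + y \<in> C"
      "\<And>x y. x \<in> C \<Longrightarrow> y \<in> C \<Longrightarrow> x * y \<in> C" "\<And>x. x \<in> C \<Longrightarrow> - x \<in> C"
      "\<And>x c. x \<in> C \<Longrightarrow> sU c x \<in> C"
  shows "is_invariant_ialg \<lparr>icar = C, iadd = (+), izero = 0, ineg = uminus, ism = sU,
      imul = (*), ione = 1, iq = q\<rparr>"
proof -
  have alg: "vector_space sU" "\<And>c x y. sU c (x * y) = sU c x * y" "\<And>c x y. sU c (x * y) = x * sU c y"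
    "q * q = q" "\<And>x. q * (x * q) = q * x"
    using inv unfolding invariant_algebra_def k_algebra_def by (metis mult.assoc)+
  interpret U: vector_space sU by (rule alg(1))
  show ?thesis
    unfolding is_invariant_ialg_def
    by (simp add: C algebra_simps U.scale_right_distrib U.scale_left_distrib alg(2,3)[symmetric] alg(4,5))
qed

text \<open>U is generated by 1, q and i(L): the generated subalgebra is an invariant algebra
  receiving i, and the induced algebra map U \<rightarrow> generated is the identity by uniqueness.\<close>

lemma enveloping6_generated:
  fixes sU :: "'k::field \<Rightarrow> 'u::ring_1 \<Rightarrow> 'u" and i :: "'l::ab_group_add \<Rightarrow> 'u"
  assumes U: "enveloping6 sL br k sU q i"
  shows "h \<in> generated sU q i"
proof -
  let ?G = "generated sU q i"
  define alg_on :: "'u set \<Rightarrow> ('k, 'u) ialg" where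
    "alg_on C = \<lparr>icar = C, iadd = (+), izero = 0, ineg = uminus, ism = sU, imul = (*), ione = 1, iq = q\<rparr>" for C
  have inv: "invariant_algebra sU q" and lh: "lie_hom_U sL br k sU q i"
    and univ: "\<And>(A :: ('k, 'u) ialg) f. is_invariant_ialg A \<Longrightarrow> lie_hom_ialg sL br k A f \<Longrightarrow>
        \<exists>!\<phi>. inv_alg_hom_to sU q A \<phi> \<and> (\<forall>x. \<phi> (i x) = f x)"
    using U unfolding enveloping6_def by blast+
  have vs: "vector_space sU" using inv by (simp add: invariant_algebra_def k_algebra_def)
  have alg_G: "is_invariant_ialg (alg_on ?G)" and alg_U: "is_invariant_ialg (alg_on UNIV)"
    unfolding alg_on_def by (rule invariant_ialg_subset[OF inv];
        auto intro: generated.intros generated_zero[OF vs] generated_uminus[OF vs])+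
  have lie: "lie_hom_ialg sL br k (alg_on C) i" if "range i \<subseteq> C" for C
    using lh that unfolding lie_hom_ialg_def lie_hom_U_def alg_on_def ibracket6_def bracket6_def
    by (auto simp: Let_def)
  have range_G: "range i \<subseteq> ?G" by (auto intro: generated_i)
  obtain \<phi> where \<phi>: "inv_alg_hom_to sU q (alg_on ?G) \<phi>" "\<forall>x. \<phi> (i x) = i x"
    using ex1_implies_ex[OF univ[OF alg_G lie[OF range_G]]] by blast
  have "\<exists>!\<psi>. inv_alg_hom_to sU q (alg_on UNIV) \<psi> \<and> (\<forall>x. \<psi> (i x) = i x)"
    by (rule univ[OF alg_U lie[OF subset_UNIV]])
  then have unique: "\<psi> = \<psi>'" if "inv_alg_hom_to sU q (alg_on UNIV) \<psi>" "\<forall>x. \<psi> (i x) = i x"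
    "inv_alg_hom_to sU q (alg_on UNIV) \<psi>'" "\<forall>x. \<psi>' (i x) = i x" for \<psi> \<psi>'
    using that by blast
  have "inv_alg_hom_to sU q (alg_on UNIV) \<phi>" "inv_alg_hom_to sU q (alg_on UNIV) id"
    using \<phi>(1) unfolding inv_alg_hom_to_def alg_on_def by simp_all
  then have "\<phi> = id"
    using \<phi>(2) by (intro unique) simp_all
  moreover have "\<phi> h \<in> ?G" using \<phi>(1) unfolding inv_alg_hom_to_def alg_on_def by simp
  ultimately show ?thesis by simp
qed

lemma generated_hom_eq:
  fixes f g :: "'u::ring_1 \<Rightarrow> 'v::ring"
  assumes "h \<in> generated sU q i"
    and "\<And>x y. f (x + y) = f x + f y" "\<And>x y. g (x + y) = g x + g y"
    and "\<And>c x. f (sU c x) = sV c (f x)" "\<And>c x. g (sU c x) = sV c (g x)"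
    and "\<And>x y. f (x * y) = f x * f y" "\<And>x y. g (x * y) = g x * g y"
    and "f 1 = g 1" "f q = g q" "\<And>a. f (i a) = g (i a)"
  shows "f h = g h"
  using assms(1) by induct (simp_all add: assms(2-))

definition sigma_map :: "'u::ring_1 \<Rightarrow> 'u \<Rightarrow> 'u" where
  "sigma_map q a = a + q * a - a * q"

lemma sigma_map_add: "sigma_map q (x + y) = sigma_map q x + sigma_map q y"
  unfolding sigma_map_def by (simp add: algebra_simps)

lemma sigma_map_smult:
  assumes "k_algebra sU"
  shows "sigma_map q (sU c x) = sU c (sigma_map q x)"
proof -
  interpret U: vector_space sU using assms by (simp add: k_algebra_def)
  show ?thesis using assms unfolding sigma_map_def k_algebra_def
    by (metis U.scale_right_diff_distrib U.scale_right_distrib)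
qed

text \<open>In an invariant algebra sigma is multiplicative: this uses q^2 = q and qxq = qx.\<close>

lemma sigma_map_mult:
  assumes "invariant_algebra sU q"
  shows "sigma_map q (x * y) = sigma_map q x * sigma_map q y"
proof -
  have qq: "q * q = q" and qxq: "\<And>a. q * (a * q) = q * a"
    using assms unfolding invariant_algebra_def by (auto simp: mult.assoc)
  have "q * (a * (q * b)) = q * (a * b)" for a b by (metis mult.assoc qxq)
  moreover have "q * (q * b) = q * b" for b by (simp add: mult.assoc[symmetric] qq)
  moreover have "q * (a * (b * q)) = q * (a * b)" for a b by (metis mult.assoc qxq)
  ultimately show ?thesis unfolding sigma_map_def by (simp add: algebra_simps qxq)
qed

section \<open>Evaluating the coproduct against bilinear maps\<close>

locale coproduct_data =
  fixes sU :: "'k::field \<Rightarrow> 'u::ring_1 \<Rightarrow> 'u" and q :: 'u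
    and D :: "'u \<Rightarrow> ('u \<times> 'u \<Rightarrow> 'k)" and k :: 'k and i :: "'l \<Rightarrow> 'u"
  assumes inv: "invariant_algebra sU q"
    and D_fin: "\<forall>h. finite (fsupp (D h))"
    and D_add: "\<forall>x y. teq2 sU (D (x + y)) (D x + D y)"
    and D_smult: "\<forall>c x. teq2 sU (D (sU c x)) (fscale c (D x))"
    and D_mult: "\<forall>x y. teq2 sU (D (x * y)) (tmult2 (D x) (D y))"
    and D_one: "teq2 sU (D 1) (tens 1 1)"
    and D_q: "teq2 sU (D q) (tens q q)"
    and D_i: "\<forall>a. let x = i a; y = x + sU k (q * x) - x * q in
               teq2 sU (D x)
                 (tens y 1 + tens 1 y + fscale (1 - k) (tens (q * x) q)
                   + fscale (1 - k) (tens q (q * x)))"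
begin

lemma k_alg: "k_algebra sU" using inv by (simp add: invariant_algebra_def)
lemma vector_space_U: "vector_space sU" using k_alg by (simp add: k_algebra_def)

interpretation U: vector_space sU by (rule vector_space_U)

lemma scale_mult_left: "sU c (x * y) = sU c x * y" using k_alg by (simp add: k_algebra_def)
lemma scale_mult_right: "sU c (x * y) = x * sU c y" using k_alg unfolding k_algebra_def by metis
lemma q_idem: "q * q = q" using inv by (simp add: invariant_algebra_def)
lemma q_invariant: "q * x * q = q * x" using inv by (simp add: invariant_algebra_def)
lemma q_idem_left: "q * (q * x) = q * x" by (simp only: mult.assoc[symmetric] q_idem)
lemma q_invariant_right: "q * (x * q) = q * x" by (simp only: mult.assoc[symmetric] q_invariant)

lemma D_finite [simp]: "finite (fsupp (D h))" using D_fin by simp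

lemma q_times_y: "q * (x + sU k (q * x) - x * q) = sU k (q * x)"
  by (simp add: distrib_left right_diff_distrib scale_mult_right[symmetric] q_idem_left q_invariant_right)

lemma y_times_q: "(x + sU k (q * x) - x * q) * q = sU k (q * x)"
  by (simp add: distrib_right left_diff_distrib scale_mult_left[symmetric] q_invariant q_invariant_right mult.assoc q_idem)

definition Delta_eval :: "('k \<Rightarrow> 'w::ab_group_add \<Rightarrow> 'w) \<Rightarrow> ('u \<times> 'u \<Rightarrow> 'w) \<Rightarrow> 'u \<Rightarrow> 'w" where
  "Delta_eval sW \<beta> h = pairing sW (D h) \<beta>"

context
  fixes sW :: "'k \<Rightarrow> 'w::ab_group_add \<Rightarrow> 'w"
  assumes vsW: "vector_space sW"
begin

interpretation W: vector_space sW by (rule vsW)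

lemma Delta_eval_add: "bilinear_map sU sW \<beta> \<Longrightarrow> Delta_eval sW \<beta> (x + y) = Delta_eval sW \<beta> x + Delta_eval sW \<beta> y"
  unfolding Delta_eval_def
  by (subst pairing_teq2[OF vsW D_add[rule_format]]) (simp_all add: pairing_add[OF vsW])

lemma Delta_eval_smult: "bilinear_map sU sW \<beta> \<Longrightarrow> Delta_eval sW \<beta> (sU c x) = sW c (Delta_eval sW \<beta> x)"
  unfolding Delta_eval_def
  by (subst pairing_teq2[OF vsW D_smult[rule_format]]) (simp_all add: pairing_fscale[OF vsW])

lemma Delta_eval_diff: "bilinear_map sU sW \<beta> \<Longrightarrow> Delta_eval sW \<beta> (x - y) = Delta_eval sW \<beta> x - Delta_eval sW \<beta> y"
  using Delta_eval_add[of \<beta> x "- y"] Delta_eval_smult[of \<beta> "-1" y] by simp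

lemma Delta_eval_mult: "bilinear_map sU sW \<beta> \<Longrightarrow>
   Delta_eval sW \<beta> (x * y) = Delta_eval sW (\<lambda>p. Delta_eval sW (\<lambda>r. \<beta> (fst p * fst r, snd p * snd r)) y) x"
  unfolding Delta_eval_def
  by (subst pairing_teq2[OF vsW D_mult[rule_format]]) (simp_all add: pairing_tmult2[OF vsW])

lemma Delta_eval_one: "bilinear_map sU sW \<beta> \<Longrightarrow> Delta_eval sW \<beta> 1 = \<beta> (1, 1)"
  unfolding Delta_eval_def by (subst pairing_teq2[OF vsW D_one]) (simp_all add: pairing_tens[OF vsW])

lemma Delta_eval_q: "bilinear_map sU sW \<beta> \<Longrightarrow> Delta_eval sW \<beta> q = \<beta> (q, q)"
  unfolding Delta_eval_def by (subst pairing_teq2[OF vsW D_q]) (simp_all add: pairing_tens[OF vsW])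

lemma Delta_eval_i:
  fixes a :: 'l
  assumes bl: "bilinear_map sU sW \<beta>"
  defines "y \<equiv> i a + sU k (q * i a) - i a * q"
  shows "Delta_eval sW \<beta> (i a) = \<beta> (y, 1) + \<beta> (1, y)
     + sW (1 - k) (\<beta> (q * i a, q)) + sW (1 - k) (\<beta> (q, q * i a))"
proof -
  have D_ia: "teq2 sU (D (i a)) (tens y 1 + tens 1 y + fscale (1 - k) (tens (q * i a) q)
      + fscale (1 - k) (tens q (q * i a)))"
    using D_i[rule_format, of a] unfolding y_def Let_def .
  show ?thesis unfolding Delta_eval_def
    by (subst pairing_teq2[OF vsW D_ia]) (simp_all add: bl pairing_add[OF vsW] pairing_fscale[OF vsW] pairing_tens[OF vsW])
qed

lemma Delta_eval_map_add: "Delta_eval sW (\<lambda>p. f p + g p) h = Delta_eval sW f h + Delta_eval sW g h"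
  unfolding Delta_eval_def by (rule pairing_map_add[OF vsW])

lemma Delta_eval_map_scale: "Delta_eval sW (\<lambda>p. sW c (f p)) h = sW c (Delta_eval sW f h)"
  unfolding Delta_eval_def by (rule pairing_map_scale[OF vsW])

lemma Delta_eval_swap:
  "Delta_eval sW (\<lambda>p. Delta_eval sW (\<lambda>r. f p r) y) x = Delta_eval sW (\<lambda>r. Delta_eval sW (\<lambda>p. f p r) x) y"
  unfolding Delta_eval_def by (rule pairing_swap[OF vsW])

lemma bilinear_map_mult_left: "bilinear_map sU sW \<beta> \<Longrightarrow> bilinear_map sU sW (\<lambda>r. \<beta> (a * fst r, b * snd r))"
  unfolding bilinear_map_def by (simp add: distrib_left scale_mult_right[symmetric])

lemma bilinear_map_mult_right: "bilinear_map sU sW \<beta> \<Longrightarrow> bilinear_map sU sW (\<lambda>p. \<beta> (fst p * c, snd p * d))"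
  unfolding bilinear_map_def by (simp add: distrib_right scale_mult_left[symmetric])

lemma bilinear_map_Delta_eval: "bilinear_map sU sW \<beta> \<Longrightarrow>
    bilinear_map sU sW (\<lambda>p. Delta_eval sW (\<lambda>r. \<beta> (fst p * fst r, snd p * snd r)) y)"
  unfolding bilinear_map_def
  by (simp add: distrib_right scale_mult_left[symmetric] Delta_eval_map_add Delta_eval_map_scale)

text \<open>Delta(q x) = Delta(x q) = qx \<otimes> q + q \<otimes> qx for x = i a; the k-dependent
  coefficients cancel.\<close>

lemma Delta_eval_qx:
  assumes bl: "bilinear_map sU sW \<beta>"
  shows "Delta_eval sW \<beta> (q * i a) = \<beta> (q * i a, q) + \<beta> (q, q * i a)"
proof -
  have "Delta_eval sW \<beta> (q * i a) = Delta_eval sW (\<lambda>r. \<beta> (q * fst r, q * snd r)) (i a)"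
    by (simp add: Delta_eval_mult[OF bl] Delta_eval_q[OF bilinear_map_Delta_eval[OF bl]])
  also have "\<dots> = sW k (\<beta> (q * i a, q)) + sW k (\<beta> (q, q * i a))
      + sW (1 - k) (\<beta> (q * i a, q)) + sW (1 - k) (\<beta> (q, q * i a))"
    by (simp add: Delta_eval_i[OF bilinear_map_mult_left[OF bl]] q_times_y q_idem_left q_idem
        bilinear_mapD(3,4)[OF bl])
  finally show ?thesis by (simp add: algebra_simps W.scale_left_diff_distrib)
qed

lemma Delta_eval_xq:
  assumes bl: "bilinear_map sU sW \<beta>"
  shows "Delta_eval sW \<beta> (i a * q) = \<beta> (q * i a, q) + \<beta> (q, q * i a)"
proof -
  have "Delta_eval sW \<beta> (i a * q) = Delta_eval sW (\<lambda>p. \<beta> (fst p * q, snd p * q)) (i a)"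
    by (simp add: Delta_eval_mult[OF bl] Delta_eval_q[OF bilinear_map_mult_left[OF bl]])
  also have "\<dots> = sW k (\<beta> (q * i a, q)) + sW k (\<beta> (q, q * i a))
      + sW (1 - k) (\<beta> (q * i a, q)) + sW (1 - k) (\<beta> (q, q * i a))"
    by (simp add: Delta_eval_i[OF bilinear_map_mult_right[OF bl]] y_times_q q_invariant q_idem
        bilinear_mapD(3,4)[OF bl])
  finally show ?thesis by (simp add: algebra_simps W.scale_left_diff_distrib)
qed

lemma Delta_eval_primitive:
  fixes a :: 'l
  assumes bl: "bilinear_map sU sW \<beta>"
  defines "y \<equiv> i a + sU k (q * i a) - i a * q"
  shows "Delta_eval sW \<beta> y = \<beta> (y, 1) + \<beta> (1, y)"
proof -
  let ?u = "\<beta> (q * i a, q) + \<beta> (q, q * i a)"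
  have "Delta_eval sW \<beta> y = Delta_eval sW \<beta> (i a) + sW k ?u - ?u"
    by (simp add: y_def Delta_eval_diff[OF bl] Delta_eval_add[OF bl] Delta_eval_smult[OF bl]
        Delta_eval_qx[OF bl] Delta_eval_xq[OF bl])
  also have "\<dots> = \<beta> (y, 1) + \<beta> (1, y) + (sW ((1 - k) + k) ?u - ?u)"
    by (simp add: Delta_eval_i[OF bl] y_def W.scale_right_distrib W.scale_left_distrib algebra_simps)
  finally show ?thesis by simp
qed

end

abbreviation "Delta_form \<equiv> Delta_eval ((*) :: 'k \<Rightarrow> 'k \<Rightarrow> 'k)"

definition eval_id_Delta :: "('u \<times> 'u \<times> 'u \<Rightarrow> 'k) \<Rightarrow> 'u \<Rightarrow> 'k" where
  "eval_id_Delta \<gamma> h = Delta_form (\<lambda>p. Delta_form (\<lambda>r. \<gamma> (fst p, r)) (snd p)) h"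

definition eval_Delta_id :: "('u \<times> 'u \<times> 'u \<Rightarrow> 'k) \<Rightarrow> 'u \<Rightarrow> 'k" where
  "eval_Delta_id \<gamma> h = Delta_form (\<lambda>p. Delta_form (\<lambda>r. \<gamma> (fst r, snd r, snd p)) (fst p)) h"

lemma bilinear_slice_first: "trilinear_form sU \<gamma> \<Longrightarrow> bilinear_map sU (*) (\<lambda>r. \<gamma> (a, r))"
  unfolding bilinear_map_def by (simp add: trilinear_formD)

lemma bilinear_slice_last: "trilinear_form sU \<gamma> \<Longrightarrow> bilinear_map sU (*) (\<lambda>r. \<gamma> (fst r, snd r, b))"
  unfolding bilinear_map_def by (simp add: trilinear_formD)

lemma bilinear_id_Delta: "trilinear_form sU \<gamma> \<Longrightarrow>
    bilinear_map sU (*) (\<lambda>p. Delta_form (\<lambda>r. \<gamma> (fst p, r)) (snd p))"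
  unfolding bilinear_map_def
  by (simp add: trilinear_formD_pair Delta_eval_map_add[OF vector_space_field] Delta_eval_map_scale[OF vector_space_field]
      Delta_eval_add[OF vector_space_field bilinear_slice_first] Delta_eval_smult[OF vector_space_field bilinear_slice_first])

lemma bilinear_Delta_id: "trilinear_form sU \<gamma> \<Longrightarrow>
    bilinear_map sU (*) (\<lambda>p. Delta_form (\<lambda>r. \<gamma> (fst r, snd r, snd p)) (fst p))"
  unfolding bilinear_map_def
  by (simp add: trilinear_formD Delta_eval_map_add[OF vector_space_field] Delta_eval_map_scale[OF vector_space_field]
      Delta_eval_add[OF vector_space_field bilinear_slice_last] Delta_eval_smult[OF vector_space_field bilinear_slice_last])

lemma trilinear_form_mult_left: "trilinear_form sU \<gamma> \<Longrightarrow>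
    trilinear_form sU (\<lambda>t. \<gamma> (a * fst t, b * fst (snd t), c * snd (snd t)))"
  unfolding trilinear_form_def by (simp add: distrib_left scale_mult_right[symmetric])

lemma trilinear_form_iterated: "trilinear_form sU \<gamma> \<Longrightarrow>
  trilinear_form sU (\<lambda>t. Delta_form (\<lambda>r. Delta_form (\<lambda>s.
      \<gamma> (fst t * fst s, fst (snd t) * snd s, snd (snd t) * snd r)) (fst r)) y)"
  unfolding trilinear_form_def
  by (simp add: distrib_right scale_mult_left[symmetric] Delta_eval_map_add[OF vector_space_field] Delta_eval_map_scale[OF vector_space_field])

lemma coassoc_linear:
  assumes "trilinear_form sU \<gamma>"
  shows "eval_id_Delta \<gamma> (x + y) = eval_id_Delta \<gamma> x + eval_id_Delta \<gamma> y"
    "eval_Delta_id \<gamma> (x + y) = eval_Delta_id \<gamma> x + eval_Delta_id \<gamma> y"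
    "eval_id_Delta \<gamma> (sU c x) = c * eval_id_Delta \<gamma> x"
    "eval_Delta_id \<gamma> (sU c x) = c * eval_Delta_id \<gamma> x"
  unfolding eval_id_Delta_def eval_Delta_id_def using assms
  by (simp_all add: Delta_eval_add[OF vector_space_field bilinear_id_Delta] Delta_eval_add[OF vector_space_field bilinear_Delta_id]
      Delta_eval_smult[OF vector_space_field bilinear_id_Delta] Delta_eval_smult[OF vector_space_field bilinear_Delta_id])

lemma coassoc_generators:
  assumes tg: "trilinear_form sU \<gamma>"
  shows "eval_id_Delta \<gamma> 1 = eval_Delta_id \<gamma> 1" "eval_id_Delta \<gamma> q = eval_Delta_id \<gamma> q"
    "eval_id_Delta \<gamma> (i a) = eval_Delta_id \<gamma> (i a)"
  unfolding eval_id_Delta_def eval_Delta_id_def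
  using bilinear_slice_first[OF tg] bilinear_slice_last[OF tg]
    bilinear_id_Delta[OF tg] bilinear_Delta_id[OF tg]
  by (simp_all add: Delta_eval_one[OF vector_space_field] Delta_eval_q[OF vector_space_field] Delta_eval_i[OF vector_space_field]
      Delta_eval_qx[OF vector_space_field] Delta_eval_primitive[OF vector_space_field] algebra_simps)

text \<open>Using multiplicativity of Delta and Fubini, the hypothesis at y is
  applied to the shifted forms, that at x to an iterated one.\<close>

lemma coassoc_mult:
  assumes IHx: "\<And>\<gamma>. trilinear_form sU \<gamma> \<Longrightarrow> eval_id_Delta \<gamma> x = eval_Delta_id \<gamma> x"
    and IHy: "\<And>\<gamma>. trilinear_form sU \<gamma> \<Longrightarrow> eval_id_Delta \<gamma> y = eval_Delta_id \<gamma> y"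
    and tg: "trilinear_form sU \<gamma>"
  shows "eval_id_Delta \<gamma> (x * y) = eval_Delta_id \<gamma> (x * y)"
proof -
  define F :: "'u \<times> 'u \<Rightarrow> 'u \<times> 'u \<Rightarrow> 'u \<times> 'u \<Rightarrow> 'k" where "F = (\<lambda>p r u. Delta_form (\<lambda>v. \<gamma> (fst p * fst r, fst u * fst v, snd u * snd v)) (snd r))"
  define K :: "'u \<times> 'u \<times> 'u \<Rightarrow> 'k" where "K = (\<lambda>t. Delta_form (\<lambda>r. Delta_form (\<lambda>s.
      \<gamma> (fst t * fst s, fst (snd t) * snd s, snd (snd t) * snd r)) (fst r)) y)"
  define G :: "'u \<times> 'u \<Rightarrow> 'u \<times> 'u \<Rightarrow> 'u \<times> 'u \<Rightarrow> 'k" where "G = (\<lambda>p r w. Delta_form (\<lambda>s. \<gamma> (fst w * fst s, snd w * snd s, snd p * snd r)) (fst r))"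
  have inner: "Delta_form (\<lambda>r. F p r u) y = K (fst p, u)" for p u
  proof -
    let ?\<gamma>' = "\<lambda>t. \<gamma> (fst p * fst t, fst u * fst (snd t), snd u * snd (snd t))"
    have "Delta_form (\<lambda>r. F p r u) y = eval_id_Delta ?\<gamma>' y"
      unfolding eval_id_Delta_def F_def by simp
    also have "\<dots> = eval_Delta_id ?\<gamma>' y"
      using IHy trilinear_form_mult_left[OF tg] by blast
    finally show ?thesis unfolding eval_Delta_id_def K_def by simp
  qed
  have "eval_id_Delta \<gamma> (x * y) = Delta_form (\<lambda>p. Delta_form (\<lambda>r. Delta_form (\<lambda>u. F p r u) (snd p)) y) x"
    unfolding eval_id_Delta_def F_def
    by (simp add: Delta_eval_mult[OF vector_space_field bilinear_id_Delta[OF tg]]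
        Delta_eval_mult[OF vector_space_field bilinear_slice_first[OF tg]])
  also have "\<dots> = Delta_form (\<lambda>p. Delta_form (\<lambda>u. K (fst p, u)) (snd p)) x"
    by (simp only: Delta_eval_swap[OF vector_space_field, of "\<lambda>r u. F _ r u"] inner)
  also have "\<dots> = eval_Delta_id K x"
    using IHx[OF trilinear_form_iterated[OF tg]] unfolding eval_id_Delta_def K_def .
  also have "\<dots> = Delta_form (\<lambda>p. Delta_form (\<lambda>w. Delta_form (\<lambda>r. G p r w) y) (fst p)) x"
    unfolding eval_Delta_id_def K_def G_def by simp
  also have "\<dots> = Delta_form (\<lambda>p. Delta_form (\<lambda>r. Delta_form (\<lambda>w. G p r w) (fst p)) y) x"
    by (simp only: Delta_eval_swap[OF vector_space_field, of "\<lambda>w r. G _ r w"])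
  also have "\<dots> = eval_Delta_id \<gamma> (x * y)"
    unfolding eval_Delta_id_def G_def
    by (simp add: Delta_eval_mult[OF vector_space_field bilinear_Delta_id[OF tg]]
        Delta_eval_mult[OF vector_space_field bilinear_slice_last[OF tg]])
  finally show ?thesis .
qed

lemma coassoc_eval:
  "h \<in> generated sU q i \<Longrightarrow> trilinear_form sU \<gamma> \<Longrightarrow> eval_id_Delta \<gamma> h = eval_Delta_id \<gamma> h"
proof (induct arbitrary: \<gamma> rule: generated.induct)
  case (generated_mult x y) then show ?case by (blast intro: coassoc_mult)
qed (simp_all add: coassoc_generators coassoc_linear)

text \<open>The representatives of (id \<otimes> Delta) and (Delta \<otimes> id), paired with a trilinear form,
  give the evaluations above.  (a \<otimes> G) and (G \<otimes> b) are the 3-tensor embeddings.\<close>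

definition tens_left :: "'u \<Rightarrow> ('u \<times> 'u \<Rightarrow> 'k) \<Rightarrow> ('u \<times> 'u \<times> 'u \<Rightarrow> 'k)" where
  "tens_left a G = (\<lambda>t. if fst t = a then G (snd t) else 0)"

definition tens_right :: "('u \<times> 'u \<Rightarrow> 'k) \<Rightarrow> 'u \<Rightarrow> ('u \<times> 'u \<times> 'u \<Rightarrow> 'k)" where
  "tens_right G b = (\<lambda>t. if snd (snd t) = b then G (fst t, fst (snd t)) else 0)"

lemma fsupp_tens_left: "fsupp (tens_left a G) = Pair a ` fsupp G"
  by (auto simp: fsupp_def tens_left_def image_iff)

lemma fsupp_tens_right: "fsupp (tens_right G b) = (\<lambda>r. (fst r, snd r, b)) ` fsupp G"
  by (auto simp: fsupp_def tens_right_def image_iff)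

lemma pairing_tens_left: "pairing (*) (tens_left a G) \<gamma> = pairing (*) G (\<lambda>r. \<gamma> (a, r))"
  unfolding pairing_def fsupp_tens_left by (subst sum.reindex) (auto simp: inj_on_def tens_left_def)

lemma pairing_tens_right: "pairing (*) (tens_right G b) \<gamma> = pairing (*) G (\<lambda>r. \<gamma> (fst r, snd r, b))"
  unfolding pairing_def fsupp_tens_right by (subst sum.reindex) (auto simp: inj_on_def tens_right_def)

lemma pairing_sum:
  fixes \<Phi> :: "'a \<Rightarrow> 'p \<Rightarrow> 'k"
  assumes "finite A" "\<And>p. p \<in> A \<Longrightarrow> finite (fsupp (\<Phi> p))"
  shows "finite (fsupp (\<lambda>t. \<Sum>p\<in>A. \<Phi> p t)) \<and>
         pairing (*) (\<lambda>t. \<Sum>p\<in>A. \<Phi> p t) \<gamma> = (\<Sum>p\<in>A. pairing (*) (\<Phi> p) \<gamma>)"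
  using assms
proof (induct A rule: finite_induct)
  case empty then show ?case by (simp add: pairing_def fsupp_def)
next
  case (insert a A)
  then have "(\<lambda>t. \<Sum>p\<in>insert a A. \<Phi> p t) = \<Phi> a + (\<lambda>t. \<Sum>p\<in>A. \<Phi> p t)"
    by (simp add: fun_eq_iff)
  with insert show ?case by (simp add: pairing_add[OF vector_space_field])
qed

lemma pairing_id_tensor:
  "finite (fsupp (id_tensor D (D h))) \<and> pairing (*) (id_tensor D (D h)) \<gamma> = eval_id_Delta \<gamma> h"
proof -
  have "id_tensor D (D h) = (\<lambda>t. \<Sum>p\<in>fsupp (D h). fscale (D h p) (tens_left (fst p) (D (snd p))) t)"
    unfolding id_tensor_def tens_left_def fscale_def
    by (rule ext) (simp add: case_prod_unfold if_distrib cong: if_cong)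
  then show ?thesis
    using pairing_sum[of "fsupp (D h)" "\<lambda>p. fscale (D h p) (tens_left (fst p) (D (snd p)))" \<gamma>]
    unfolding eval_id_Delta_def Delta_eval_def
    by (simp add: fsupp_tens_left pairing_fscale[OF vector_space_field] pairing_tens_left) (simp add: pairing_def)
qed

lemma pairing_tensor_id:
  "finite (fsupp (tensor_id D (D h))) \<and> pairing (*) (tensor_id D (D h)) \<gamma> = eval_Delta_id \<gamma> h"
proof -
  have "tensor_id D (D h) = (\<lambda>t. \<Sum>p\<in>fsupp (D h). fscale (D h p) (tens_right (D (fst p)) (snd p)) t)"
    unfolding tensor_id_def tens_right_def fscale_def
    by (rule ext) (simp add: case_prod_unfold if_distrib cong: if_cong)
  then show ?thesis
    using pairing_sum[of "fsupp (D h)" "\<lambda>p. fscale (D h p) (tens_right (D (fst p)) (snd p))" \<gamma>]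
    unfolding eval_Delta_id_def Delta_eval_def
    by (simp add: fsupp_tens_right pairing_fscale[OF vector_space_field] pairing_tens_right) (simp add: pairing_def)
qed

text \<open>Coassociativity on U, via separation by trilinear forms.\<close>

theorem coassociative:
  assumes "h \<in> generated sU q i"
  shows "teq3 sU (id_tensor D (D h)) (tensor_id D (D h))"
  unfolding teq3_def
  using pairing_id_tensor pairing_tensor_id coassoc_eval[OF assms]
  by (intro tensor_rel3_separation) (simp_all add: pairing_diff[OF vector_space_field])

end

section \<open>The sigma-counit\<close>

locale counit_data = coproduct_data sU q D k i
  for sU :: "'k::field \<Rightarrow> 'u::ring_1 \<Rightarrow> 'u" and q D k and i :: "'l \<Rightarrow> 'u" +
  fixes e :: "'u \<Rightarrow> 'k"
  assumes e_add: "\<forall>x y. e (x + y) = e x + e y"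
    and e_smult: "\<forall>c x. e (sU c x) = c * e x"
    and e_mult: "\<forall>x y. e (x * y) = e x * e y"
    and e_one: "e 1 = 1"
    and e_q: "e q = 1"
    and e_i: "\<forall>a. e (i a) = 0"
begin

interpretation U: vector_space sU by (rule vector_space_U)

lemma e_diff: "e (x - y) = e x - e y"
  using e_add[rule_format, of "x - y" y] by (simp add: eq_diff_eq)

lemma e_neg: "e (- x) = - e x"
  using e_diff[of 0 x] e_diff[of 0 0] by simp

lemma Delta_eval_multiplicative:
  assumes bl: "bilinear_map sU sU \<beta>" and m: "\<And>a b c d. \<beta> (a * c, b * d) = \<beta> (a, b) * \<beta> (c, d)"
  shows "Delta_eval sU \<beta> (x * y) = Delta_eval sU \<beta> x * Delta_eval sU \<beta> y"
  using Delta_eval_mult[OF vector_space_U bl, of x y]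
  unfolding Delta_eval_def m by (simp add: pairing_mult_left[OF k_alg] pairing_mult_right[OF k_alg])

definition eps_left :: "'u \<times> 'u \<Rightarrow> 'u" where "eps_left p = sU (e (fst p)) (snd p)"
definition eps_right :: "'u \<times> 'u \<Rightarrow> 'u" where "eps_right p = sU (e (snd p)) (fst p)"

lemma bilinear_eps_left: "bilinear_map sU sU eps_left"
  unfolding bilinear_map_def eps_left_def
  by (simp add: e_add e_smult U.scale_left_distrib U.scale_right_distrib mult.commute)

lemma bilinear_eps_right: "bilinear_map sU sU eps_right"
  unfolding bilinear_map_def eps_right_def
  by (simp add: e_add e_smult U.scale_left_distrib U.scale_right_distrib mult.commute)

lemma eps_left_mult: "eps_left (a * c, b * d) = eps_left (a, b) * eps_left (c, d)"
  unfolding eps_left_def by (simp add: e_mult scale_mult_left[symmetric] scale_mult_right[symmetric] mult.commute)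

lemma eps_right_mult: "eps_right (a * c, b * d) = eps_right (a, b) * eps_right (c, d)"
  unfolding eps_right_def by (simp add: e_mult scale_mult_left[symmetric] scale_mult_right[symmetric] mult.commute)

lemma e_qx: "e (q * i a) = 0"
  by (simp add: e_mult e_i)

lemma e_primitive: "e (i a + sU k (q * i a) - i a * q) = 0"
  by (simp add: e_diff e_add e_smult e_mult e_i)

text \<open>Both sides are algebra maps, so it suffices to compare them on generators; on
  x = i a the coproduct gives y + (1 - k) qx = x + qx - xq.\<close>

lemma counit_eval:
  assumes h: "h \<in> generated sU q i" and \<beta>: "\<beta> = eps_left \<or> \<beta> = eps_right"
  shows "Delta_eval sU \<beta> h = sigma_map q h"
proof -
  have bl: "bilinear_map sU sU \<beta>"
    and mult: "\<And>a b c d. \<beta> (a * c, b * d) = \<beta> (a, b) * \<beta> (c, d)"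
    using \<beta> bilinear_eps_left bilinear_eps_right eps_left_mult eps_right_mult by auto
  have unit: "\<beta> (1, 1) = 1" "\<beta> (q, q) = q"
    and primitive: "\<beta> (i a + sU k (q * i a) - i a * q, 1) + \<beta> (1, i a + sU k (q * i a) - i a * q)
        = i a + sU k (q * i a) - i a * q"
    and qx: "\<beta> (q * i a, q) + \<beta> (q, q * i a) = q * i a" for a
    using \<beta> by (auto simp: eps_left_def eps_right_def e_one e_q q_idem e_primitive e_qx)
  have generator: "Delta_eval sU \<beta> (i a) = sigma_map q (i a)" for a
    unfolding Delta_eval_i[OF vector_space_U bl] primitive
      add.assoc U.scale_right_distrib[symmetric] qx sigma_map_def
    by (simp add: U.scale_left_diff_distrib algebra_simps)
  from h show ?thesis
    by (rule generated_hom_eq[where sV = sU])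
      (simp_all add: generator Delta_eval_add[OF vector_space_U bl] Delta_eval_smult[OF vector_space_U bl]
        Delta_eval_multiplicative[OF bl mult] Delta_eval_one[OF vector_space_U bl]
        Delta_eval_q[OF vector_space_U bl] unit sigma_map_add sigma_map_smult[OF k_alg]
        sigma_map_mult[OF inv] sigma_map_def[of q 1] sigma_map_def[of q q] q_idem)
qed

theorem bialgebra:
  assumes gen: "\<And>h. h \<in> generated sU q i"
  shows "bialgebra_sigma sU D e (sigma_map q)"
proof -
  have "eps_tensor_id sU e F = pairing sU F eps_left" "id_tensor_eps sU e F = pairing sU F eps_right" for F
    unfolding eps_tensor_id_def id_tensor_eps_def pairing_def eps_left_def eps_right_def
    by (simp_all add: case_prod_unfold mult.commute)
  then show ?thesis
    using counit_eval[OF gen, where \<beta> = eps_left] counit_eval[OF gen, where \<beta> = eps_right] coassociative[OF gen] D_fin D_add D_smult D_mult D_one e_add e_smult e_mult e_one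
    unfolding bialgebra_sigma_def Delta_eval_def
    by (simp add: k_alg sigma_map_add sigma_map_smult[OF k_alg])
qed

end

section \<open>The antipode-like map\<close>

locale antipode_data = counit_data sU q D k i e
  for sU :: "'k::field \<Rightarrow> 'u::ring_1 \<Rightarrow> 'u" and q D k and i :: "'l \<Rightarrow> 'u" and e +
  fixes S :: "'u \<Rightarrow> 'u"
  assumes k_nonzero: "k \<noteq> 0"
    and S: "invariant_antihom sU q S"
    and S_i: "\<forall>a. S (i a) = - sU (1 / k) (i a) - sU k (q * i a) + sU (1 / k) (i a * q)"
begin

interpretation U: vector_space sU by (rule vector_space_U)

lemma S_add: "S (x + y) = S x + S y" using S by (simp add: invariant_antihom_def)
lemma S_smult: "S (sU c x) = sU c (S x)" using S by (simp add: invariant_antihom_def)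
lemma S_mult: "S (a * b) = S b * S a" using S by (simp add: invariant_antihom_def)
lemma S_one: "S 1 = 1" using S by (simp add: invariant_antihom_def)
lemma S_q: "S q = 1 - q" using S by (simp add: invariant_antihom_def)
lemma S_diff: "S (x - y) = S x - S y" using S_add[of x "- y"] S_smult[of "-1" y] by simp

definition S_left :: "'u \<times> 'u \<Rightarrow> 'u" where "S_left p = S (fst p) * snd p"
definition S_right :: "'u \<times> 'u \<Rightarrow> 'u" where "S_right p = fst p * S (snd p)"

lemma bilinear_S_left: "bilinear_map sU sU S_left"
  unfolding bilinear_map_def S_left_def
  by (simp add: S_add S_smult distrib_left distrib_right scale_mult_left[symmetric] scale_mult_right[symmetric])

lemma bilinear_S_right: "bilinear_map sU sU S_right"
  unfolding bilinear_map_def S_right_def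
  by (simp add: S_add S_smult distrib_left distrib_right scale_mult_left[symmetric] scale_mult_right[symmetric])

text \<open>Values of S around a generator x = i a: S x q = q S x = -k qx, and S reverses the
  sign of the primitive element y = x + kqx - xq (this is where k \<noteq> 0 enters).\<close>

lemma S_i_times_q: "S (i a) * q = - sU k (q * i a)"
  by (simp add: S_i algebra_simps scale_mult_left[symmetric] q_idem q_invariant q_invariant_right)

lemma q_times_S_i: "q * S (i a) = - sU k (q * i a)"
  by (simp add: S_i algebra_simps scale_mult_right[symmetric] q_idem q_invariant_right q_idem_left)

lemma S_primitive: "S (i a + sU k (q * i a) - i a * q) = - (i a + sU k (q * i a) - i a * q)"
proof -
  let ?x = "i a" let ?P = "q * i a"
  have "S (?x + sU k ?P - ?x * q) = S ?x + sU k (S ?x * (1 - q)) - (1 - q) * S ?x"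
    by (simp add: S_diff S_add S_smult S_mult S_q)
  also have "\<dots> = sU k (S ?x) + sU (k * k) ?P - sU k ?P"
    by (simp add: algebra_simps U.scale_right_diff_distrib S_i_times_q q_times_S_i)
  also have "sU k (S ?x) = - ?x - sU (k * k) ?P + ?x * q"
    using k_nonzero by (simp add: S_i U.scale_right_diff_distrib U.scale_right_distrib)
  finally show ?thesis by (simp add: algebra_simps)
qed

lemma e_S_i: "e (S (i a)) = 0"
  by (simp add: S_i e_add e_diff e_neg e_smult e_mult e_i)

text \<open>The (1 - k)-terms of Delta(i a) are killed by both m(S \<otimes> id) and m(id \<otimes> S).\<close>

lemma S_left_qx_terms: "S (q * x) * q = 0" "S q * (q * x) = 0"
  by (simp_all add: S_mult S_q left_diff_distrib right_diff_distrib q_idem q_idem_left mult.assoc)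

lemma S_right_qx_terms: "q * x * S q = 0" "q * S (q * x) = 0"
  by (simp_all add: S_mult S_q right_diff_distrib mult.assoc[symmetric] q_invariant)

lemma unit_e_S_linear:
  "sU (e (S (x + y))) 1 = sU (e (S x)) 1 + sU (e (S y)) 1"
  "sU (e (S (sU c x))) 1 = sU c (sU (e (S x)) 1)"
  by (simp_all add: S_add S_smult e_add e_smult U.scale_left_distrib)

text \<open>m(S \<otimes> id)Delta = u epsilon S: on generators by direct computation, and for products
  because (S \<otimes> id)Delta(xy) = S(x_2) [S(x_1) y_1] y_2 (Sweedler notation) collapses.\<close>

lemma antipode_left:
  assumes "h \<in> generated sU q i"
  shows "Delta_eval sU S_left h = sU (e (S h)) 1"
  using assms
proof induct
  case generated_one then show ?case
    by (simp add: Delta_eval_one[OF vector_space_U bilinear_S_left]) (simp add: S_left_def S_one e_one)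
next
  case generated_q then show ?case
    by (simp add: Delta_eval_q[OF vector_space_U bilinear_S_left])
      (simp add: S_left_def S_q e_diff e_one e_q algebra_simps q_idem)
next
  case (generated_i a) then show ?case
    by (simp add: Delta_eval_i[OF vector_space_U bilinear_S_left])
       (simp add: S_left_def S_one S_primitive S_left_qx_terms e_S_i)
next
  case (generated_mult x y)
  have "Delta_eval sU S_left (x * y) =
      Delta_eval sU (\<lambda>p. Delta_eval sU (\<lambda>r. S (fst r) * S_left p * snd r) y) x"
    by (simp add: Delta_eval_mult[OF vector_space_U bilinear_S_left]) (simp add: S_left_def S_mult mult.assoc)
  also have "\<dots> = Delta_eval sU (\<lambda>r. Delta_eval sU (\<lambda>p. S (fst r) * S_left p * snd r) x) y"
    by (rule Delta_eval_swap[OF vector_space_U])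
  also have "\<dots> = Delta_eval sU (\<lambda>r. S (fst r) * Delta_eval sU S_left x * snd r) y"
    unfolding Delta_eval_def by (simp add: pairing_mult_left[OF k_alg] pairing_mult_right[OF k_alg])
  also have "\<dots> = Delta_eval sU (\<lambda>r. sU (e (S x)) (S_left r)) y"
    by (simp only: generated_mult(2)) (simp add: S_left_def scale_mult_left[symmetric] scale_mult_right[symmetric])
  finally show ?case
    using generated_mult by (simp add: Delta_eval_map_scale[OF vector_space_U] S_mult e_mult mult.commute)
qed (simp_all add: Delta_eval_add[OF vector_space_U bilinear_S_left]
    Delta_eval_smult[OF vector_space_U bilinear_S_left] unit_e_S_linear)

lemma antipode_right:
  assumes "h \<in> generated sU q i"
  shows "Delta_eval sU S_right h = sU (e (S h)) 1"
  using assms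
proof induct
  case generated_one then show ?case
    by (simp add: Delta_eval_one[OF vector_space_U bilinear_S_right]) (simp add: S_right_def S_one e_one)
next
  case generated_q then show ?case
    by (simp add: Delta_eval_q[OF vector_space_U bilinear_S_right])
      (simp add: S_right_def S_q e_diff e_one e_q algebra_simps q_idem)
next
  case (generated_i a) then show ?case
    by (simp add: Delta_eval_i[OF vector_space_U bilinear_S_right])
       (simp add: S_right_def S_one S_primitive S_right_qx_terms e_S_i)
next
  case (generated_mult x y)
  have "Delta_eval sU S_right (x * y) =
      Delta_eval sU (\<lambda>p. Delta_eval sU (\<lambda>r. fst p * S_right r * S (snd p)) y) x"
    by (simp add: Delta_eval_mult[OF vector_space_U bilinear_S_right]) (simp add: S_right_def S_mult mult.assoc)
  also have "\<dots> = Delta_eval sU (\<lambda>p. fst p * Delta_eval sU S_right y * S (snd p)) x"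
    unfolding Delta_eval_def by (simp add: pairing_mult_left[OF k_alg] pairing_mult_right[OF k_alg])
  also have "\<dots> = Delta_eval sU (\<lambda>p. sU (e (S y)) (S_right p)) x"
    by (simp only: generated_mult(4)) (simp add: S_right_def scale_mult_left[symmetric] scale_mult_right[symmetric])
  finally show ?case
    using generated_mult by (simp add: Delta_eval_map_scale[OF vector_space_U] S_mult e_mult)
qed (simp_all add: Delta_eval_add[OF vector_space_U bilinear_S_right]
    Delta_eval_smult[OF vector_space_U bilinear_S_right] unit_e_S_linear)

theorem hopf_like:
  assumes gen: "\<And>h. h \<in> generated sU q i"
  shows "hopf_like sU D e (sigma_map q) S"
proof -
  have "m_tensor sU S id F = pairing sU F S_left" "m_tensor sU id S F = pairing sU F S_right" for F
    unfolding m_tensor_def pairing_def S_left_def S_right_def by (simp_all add: case_prod_unfold)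
  then have "m_tensor sU S id (D h) = sU (e (S h)) 1" "m_tensor sU id S (D h) = sU (e (S h)) 1" for h
    using antipode_left[OF gen] antipode_right[OF gen] unfolding Delta_eval_def by simp_all
  then show ?thesis
    unfolding hopf_like_def using bialgebra[OF gen] S_add S_smult by blast
qed

end

theorem proposition7p4:
  fixes sL :: "'k::field \<Rightarrow> 'l::ab_group_add \<Rightarrow> 'l"
    and br :: "'l \<Rightarrow> 'l \<Rightarrow> 'l"
    and k :: 'k
    and sU :: "'k \<Rightarrow> 'u::ring_1 \<Rightarrow> 'u"
    and q :: 'u
    and i :: "'l \<Rightarrow> 'u"
    and D :: "'u \<Rightarrow> ('u \<times> 'u \<Rightarrow> 'k)"
    and e :: "'u \<Rightarrow> 'k"
    and s S :: "'u \<Rightarrow> 'u"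
  assumes L: "lie_algebra sL br"
    and k: "k \<noteq> 0"
    and U: "enveloping6 sL br k sU q i"
    \<comment> \<open>\<Delta>: the unital algebra homomorphism U \<rightarrow> U \<otimes> U with the given values\<close>
    and D_fin: "\<forall>h. finite (fsupp (D h))"
    and D_add: "\<forall>x y. teq2 sU (D (x + y)) (D x + D y)"
    and D_smult: "\<forall>c x. teq2 sU (D (sU c x)) (fscale c (D x))"
    and D_mult: "\<forall>x y. teq2 sU (D (x * y)) (tmult2 (D x) (D y))"
    and D_one: "teq2 sU (D 1) (tens 1 1)"
    and D_q: "teq2 sU (D q) (tens q q)"
    and D_i: "\<forall>a. let x = i a; y = x + sU k (q * x) - x * q in
               teq2 sU (D x)
                 (tens y 1 + tens 1 y + fscale (1 - k) (tens (q * x) q)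
                   + fscale (1 - k) (tens q (q * x)))"
    \<comment> \<open>\<epsilon>: the unital algebra homomorphism U \<rightarrow> k with the given values\<close>
    and e_add: "\<forall>x y. e (x + y) = e x + e y"
    and e_smult: "\<forall>c x. e (sU c x) = c * e x"
    and e_mult: "\<forall>x y. e (x * y) = e x * e y"
    and e_one: "e 1 = 1"
    and e_q: "e q = 1"
    and e_i: "\<forall>a. e (i a) = 0"
    \<comment> \<open>\<sigma>\<close>
    and s_def: "\<forall>a. s a = a + q * a - a * q"
    \<comment> \<open>S: the invariant anti-homomorphism with the given values\<close>
    and S: "invariant_antihom sU q S"
    and S_i: "\<forall>a. S (i a) = - sU (1 / k) (i a) - sU k (q * i a) + sU (1 / k) (i a * q)"
  shows "bialgebra_sigma sU D e s \<and> hopf_like sU D e s S"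
proof -
  have inv: "invariant_algebra sU q" using U by (simp add: enveloping6_def)
  interpret antipode_data sU q D k i e S
    by unfold_locales (use inv D_fin D_add D_smult D_mult D_one D_q D_i e_add e_smult e_mult
        e_one e_q e_i k S S_i in auto)
  have gen: "\<And>h. h \<in> generated sU q i" by (rule enveloping6_generated[OF U])
  have "s = sigma_map q" using s_def by (simp add: fun_eq_iff sigma_map_def)
  then show ?thesis using bialgebra[OF gen] hopf_like[OF gen] by simp
qed

end
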